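(* Let $X$ be a one-sided subshift with $\sigma(X)=X$ such that $Sp_l(X,\sigma)$ is finite and contains no periodic point of $\sigma$. Then for every $x\in Sp_l(X,\sigma)$, the point $\imath(x)$ is an isolated point of $\widetilde{X}$.
   Context: $X\subseteq\mathcal{A}^{\mathbb{N}}$ is a closed shift-invariant set over a finite alphabet $\mathcal{A}$, $\sigma$ the left shift; $Sp_l(X,\sigma)=\{x\in X: |\sigma^{-1}(\{x\})|\ge2\}$; $x$ is periodic if $\sigma^n(x)=x$ for some $n\ge1$. The cover: for $x\in X$ and $l\ge0$ let $P_l(x)=\{\mu\in\mathcal{L}(X): |\mu|=l,\ \mu x\in X\}$. Let $\mathcal{I}=\{(k,l)\in\mathbb{N}^2: k\le l\}$, ordered by $(k,l)\preceq(k',l')$ iff $k\le k'$ and $l-k\le l'-k'$. For $(k,l)\in\mathcal{I}$ write $x\overset{k,l}{\sim}y$ iff $x_{[0,k)}=y_{[0,k)}$ and $P_l(\sigma^k(x))=P_l(\sigma^k(y))$; let ${}_kX_l=X/\overset{k,l}{\sim}$ (finite, discrete) with classes ${}_k[x]_l$. $\widetilde{X}$ is the projective limit of $({}_kX_l)_{(k,l)\in\mathcal{I}}$ under the maps ${}_{k'}[x]_{l'}\mapsto{}_k[x]_l$ for $(k,l)\preceq(k',l')$, with the projective limit topology. The shift $\sigma_{\widetilde{X}}(\tilde{x})_{(k,l)}={}_k[\sigma(z)]_l$ with $z$ any representative of $\tilde{x}_{(k+1,l+1)}$; $\imath(x)=({}_k[x]_l)_{(k,l)\in\mathcal{I}}$.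 *)

theory Defs
  imports "HOL-Analysis.Analysis"
begin

text \<open>One-sided sequences over a finite alphabet 'a (the type 'a :: finite plays the role of A).\<close>

definition shift :: "(nat \<Rightarrow> 'a) \<Rightarrow> (nat \<Rightarrow> 'a)" where
  "shift x = (\<lambda>n. x (Suc n))"

definition seq_top :: "(nat \<Rightarrow> 'a) topology" where
  "seq_top = product_topology (\<lambda>_. discrete_topology UNIV) UNIV"

definition subshift :: "(nat \<Rightarrow> 'a::finite) set \<Rightarrow> bool" where
  "subshift X \<longleftrightarrow> closedin seq_top X \<and> shift ` X \<subseteq> X"

definition Sp_l :: "(nat \<Rightarrow> 'a) set \<Rightarrow> (nat \<Rightarrow> 'a) set" where
  "Sp_l X = {x \<in> X. 2 \<le> card {y \<in> X. shift y = x} \<or> infinite {y \<in> X. shift y = x}}"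

definition periodic_pt :: "(nat \<Rightarrow> 'a) \<Rightarrow> bool" where
  "periodic_pt x \<longleftrightarrow> (\<exists>n\<ge>1. (shift ^^ n) x = x)"

definition conc :: "'a list \<Rightarrow> (nat \<Rightarrow> 'a) \<Rightarrow> (nat \<Rightarrow> 'a)" where
  "conc \<mu> x = (\<lambda>n. if n < length \<mu> then \<mu> ! n else x (n - length \<mu>))"

definition lang :: "(nat \<Rightarrow> 'a) set \<Rightarrow> 'a list set" where
  "lang X = {w. \<exists>x\<in>X. \<exists>i. w = map x [i..<i + length w]}"

definition P_set :: "(nat \<Rightarrow> 'a) set \<Rightarrow> nat \<Rightarrow> (nat \<Rightarrow> 'a) \<Rightarrow> 'a list set" where
  "P_set X l x = {\<mu> \<in> lang X. length \<mu> = l \<and> conc \<mu> x \<in> X}"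

definition Iset :: "(nat \<times> nat) set" where
  "Iset = {(k, l). k \<le> l}"

definition Ile :: "nat \<times> nat \<Rightarrow> nat \<times> nat \<Rightarrow> bool" where
  "Ile p q \<longleftrightarrow> fst p \<le> fst q \<and> snd p - fst p \<le> snd q - fst q"

definition kl_equiv :: "(nat \<Rightarrow> 'a) set \<Rightarrow> nat \<Rightarrow> nat \<Rightarrow> (nat \<Rightarrow> 'a) \<Rightarrow> (nat \<Rightarrow> 'a) \<Rightarrow> bool" where
  "kl_equiv X k l x y \<longleftrightarrow> (\<forall>i<k. x i = y i) \<and>
      P_set X l ((shift ^^ k) x) = P_set X l ((shift ^^ k) y)"

definition kl_class :: "(nat \<Rightarrow> 'a) set \<Rightarrow> nat \<Rightarrow> nat \<Rightarrow> (nat \<Rightarrow> 'a) \<Rightarrow> (nat \<Rightarrow> 'a) set" where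
  "kl_class X k l x = {y \<in> X. kl_equiv X k l x y}"

definition kXl :: "(nat \<Rightarrow> 'a) set \<Rightarrow> nat \<Rightarrow> nat \<Rightarrow> (nat \<Rightarrow> 'a) set set" where
  "kXl X k l = kl_class X k l ` X"

definition bond :: "(nat \<Rightarrow> 'a) set \<Rightarrow> nat \<Rightarrow> nat \<Rightarrow> (nat \<Rightarrow> 'a) set \<Rightarrow> (nat \<Rightarrow> 'a) set" where
  "bond X k l C = kl_class X k l (SOME z. z \<in> C)"

text \<open>The projective limit \<open>X~\<close>: compatible families indexed by I (functions undefined off I).\<close>
definition Xtilde :: "(nat \<Rightarrow> 'a) set \<Rightarrow> (nat \<times> nat \<Rightarrow> (nat \<Rightarrow> 'a) set) set" where
  "Xtilde X = {xt \<in> (\<Pi>\<^sub>E (k, l)\<in>Iset. kXl X k l).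
      \<forall>p\<in>Iset. \<forall>q\<in>Iset. Ile p q \<longrightarrow> xt p = bond X (fst p) (snd p) (xt q)}"

definition Xtilde_top :: "(nat \<Rightarrow> 'a) set \<Rightarrow> (nat \<times> nat \<Rightarrow> (nat \<Rightarrow> 'a) set) topology" where
  "Xtilde_top X = subtopology
      (product_topology (\<lambda>(k, l). discrete_topology (kXl X k l)) Iset) (Xtilde X)"

definition iota :: "(nat \<Rightarrow> 'a) set \<Rightarrow> (nat \<Rightarrow> 'a) \<Rightarrow> (nat \<times> nat \<Rightarrow> (nat \<Rightarrow> 'a) set)" where
  "iota X x = (\<lambda>p\<in>Iset. kl_class X (fst p) (snd p) x)"

end

theory Submission
  imports Defs
begin

text \<open>
  Since \<open>Sp_l X\<close> is finite, some prefix length \<open>k\<close> separates \<open>x\<close> from all other points of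
  \<open>Sp_l X\<close>. A point \<open>z\<close> that is \<open>(k, k+1)\<close>-equivalent to \<open>x\<close> agrees with \<open>x\<close> on \<open>[0, k)\<close> and
  admits every one-letter left extension that \<open>x\<close> admits, so it again lies in \<open>Sp_l X\<close>;
  hence \<open>z = x\<close> and the class of \<open>x\<close> in \<open>{}_kX_{k+1}\<close> is \<open>{x}\<close>. Since \<open>\<I>\<close> is directed
  and, for surjective \<open>\<sigma>\<close>, equivalence at a larger index refines equivalence at a smaller one,
  a compatible family whose \<open>(k, k+1)\<close>-coordinate is this singleton class is \<open>\<imath>(x)\<close>. So the
  basic open cylinder fixing that coordinate is \<open>{\<imath>(x)}\<close>.
\<close>

lemma funpow_shift: "(shift ^^ n) u = (\<lambda>i. u (i + n))"
  by (induction n arbitrary: u) (auto simp: shift_def funpow_Suc_right)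

lemma funpow_shift_in: "shift ` X \<subseteq> X \<Longrightarrow> v \<in> X \<Longrightarrow> (shift ^^ n) v \<in> X"
  by (induction n) auto

lemma funpow_shift_surj:
  assumes "shift ` X = X"
  shows "z \<in> X \<Longrightarrow> \<exists>u\<in>X. (shift ^^ n) u = z"
proof (induction n arbitrary: z)
  case 0
  then show ?case by auto
next
  case (Suc n)
  then obtain v where v: "v \<in> X" "shift v = z" using assms by (metis imageE)
  then obtain u where "u \<in> X" "(shift ^^ n) u = v" using Suc.IH by blast
  with v show ?case by (intro bexI[of _ u]) auto
qed

lemma conc_prefix_funpow_shift: "conc (map u [0..<n]) ((shift ^^ n) u) = u"
  by (auto simp: conc_def funpow_shift)

lemma conc_append: "conc (a @ b) z = conc a (conc b z)"
  by (rule ext) (auto simp: conc_def nth_append)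

lemma funpow_shift_conc: "(shift ^^ length \<nu>) (conc \<nu> z) = z"
  by (rule ext) (auto simp: conc_def funpow_shift)

lemma shift_conc_single: "shift (conc [a] y) = y"
  by (auto simp: conc_def shift_def)

lemma conc_in_lang: "conc \<mu> z \<in> X \<Longrightarrow> \<mu> \<in> lang X"
  unfolding lang_def
  by (rule CollectI, rule bexI[of _ "conc \<mu> z"], rule exI[of _ 0])
    (auto intro!: nth_equalityI simp: conc_def)

lemma conc_append_segment:
  "k \<le> k' \<Longrightarrow> conc (\<mu> @ map v [k..<k']) ((shift ^^ k') v) = conc \<mu> ((shift ^^ k) v)"
  by (rule ext) (auto simp: conc_def nth_append funpow_shift add.commute)

lemma conc_Cons_prefix:
  "\<forall>i<k. x i = z i \<Longrightarrow> conc (a # map x [0..<k]) ((shift ^^ k) z) = conc [a] z"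
  by (rule ext) (auto simp: conc_def funpow_shift nth_Cons split: nat.split)

lemma Ile_directed:
  assumes "p \<in> Iset" "q \<in> Iset"
  shows "\<exists>r\<in>Iset. Ile p r \<and> Ile q r"
proof -
  define k where "k = max (fst p) (fst q)"
  define r where "r = (k, k + max (snd p - fst p) (snd q - fst q))"
  have "r \<in> Iset \<and> Ile p r \<and> Ile q r"
    using assms by (auto simp: r_def k_def Iset_def Ile_def)
  then show ?thesis by blast
qed

text \<open>
  A word \<open>\<mu>\<close> of length \<open>l\<close> admissible before \<open>\<sigma>\<^sup>k x\<close> is prolonged by the letters of \<open>x\<close> at
  positions \<open>[k, k')\<close> and padded on the left, using surjectivity of \<open>\<sigma>\<close>, to a word of length \<open>l'\<close> admissible before \<open>\<sigma>\<^sup>k\<^sup>' x\<close>;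
  transporting it to \<open>y\<close> and shifting the padding away gives back \<open>\<mu>\<close> before \<open>\<sigma>\<^sup>k y\<close>.
\<close>
lemma P_set_refine_subset:
  assumes surj: "shift ` X = X"
    and sub: "P_set X l' ((shift ^^ k') x) \<subseteq> P_set X l' ((shift ^^ k') y)"
    and agree: "\<forall>i<k'. x i = y i"
    and "k \<le> k'" "l - k \<le> l' - k'" "k \<le> l" "k' \<le> l'"
  shows "P_set X l ((shift ^^ k) x) \<subseteq> P_set X l ((shift ^^ k) y)"
proof
  fix \<mu> assume "\<mu> \<in> P_set X l ((shift ^^ k) x)"
  then have len: "length \<mu> = l" and \<mu>x: "conc \<mu> ((shift ^^ k) x) \<in> X"
    by (auto simp: P_set_def)
  define w where "w = \<mu> @ map x [k..<k']"
  have wx: "conc w ((shift ^^ k') x) = conc \<mu> ((shift ^^ k) x)"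
    unfolding w_def using \<open>k \<le> k'\<close> by (rule conc_append_segment)
  obtain u where u: "u \<in> X" "(shift ^^ (l' - length w)) u = conc w ((shift ^^ k') x)"
    using funpow_shift_surj[OF surj] wx \<mu>x by metis
  define \<nu> where "\<nu> = map u [0..<l' - length w]"
  have "conc (\<nu> @ w) ((shift ^^ k') x) = u"
    unfolding conc_append \<nu>_def using u conc_prefix_funpow_shift by metis
  moreover have "length (\<nu> @ w) = l'"
    using len assms(4-7) by (simp add: \<nu>_def w_def)
  ultimately have "\<nu> @ w \<in> P_set X l' ((shift ^^ k') x)"
    using u conc_in_lang by (auto simp: P_set_def)
  with sub have "conc \<nu> (conc w ((shift ^^ k') y)) \<in> X"
    by (auto simp: P_set_def conc_append)
  then have "(shift ^^ length \<nu>) (conc \<nu> (conc w ((shift ^^ k') y))) \<in> X"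
    using funpow_shift_in surj by blast
  then have "conc w ((shift ^^ k') y) \<in> X"
    unfolding funpow_shift_conc .
  moreover have "w = \<mu> @ map y [k..<k']"
    using agree by (auto simp: w_def)
  ultimately have "conc \<mu> ((shift ^^ k) y) \<in> X"
    by (simp only: conc_append_segment[OF \<open>k \<le> k'\<close>])
  then show "\<mu> \<in> P_set X l ((shift ^^ k) y)"
    using len conc_in_lang by (auto simp: P_set_def)
qed

lemma kl_equiv_refine:
  assumes "shift ` X = X" "kl_equiv X (fst q) (snd q) x y"
    and "p \<in> Iset" "q \<in> Iset" "Ile p q"
  shows "kl_equiv X (fst p) (snd p) x y"
proof -
  obtain k l k' l' where pq: "p = (k, l)" "q = (k', l')" by fastforce
  with assms(3-5) have ineqs: "k \<le> k'" "l - k \<le> l' - k'" "k \<le> l" "k' \<le> l'"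
    by (auto simp: Iset_def Ile_def)
  from assms(2) pq have "\<forall>i<k'. x i = y i"
    and "P_set X l' ((shift ^^ k') x) = P_set X l' ((shift ^^ k') y)"
    by (auto simp: kl_equiv_def)
  with P_set_refine_subset[OF assms(1) _ _ ineqs, of x y]
       P_set_refine_subset[OF assms(1) _ _ ineqs, of y x]
  show ?thesis
    using pq ineqs by (auto simp: kl_equiv_def)
qed

lemma kl_class_self: "z \<in> X \<Longrightarrow> z \<in> kl_class X k l z"
  by (simp add: kl_class_def kl_equiv_def)

lemma kl_class_eqI: "kl_equiv X k l a b \<Longrightarrow> kl_class X k l a = kl_class X k l b"
  by (auto simp: kl_class_def kl_equiv_def)

lemma bond_kl_class:
  assumes "shift ` X = X" "z \<in> X" "p \<in> Iset" "q \<in> Iset" "Ile p q"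
  shows "bond X (fst p) (snd p) (kl_class X (fst q) (snd q) z) = kl_class X (fst p) (snd p) z"
proof -
  define w where "w = (SOME w. w \<in> kl_class X (fst q) (snd q) z)"
  have "w \<in> kl_class X (fst q) (snd q) z"
    unfolding w_def by (rule someI[where x = z]) (rule kl_class_self[OF assms(2)])
  then have "kl_equiv X (fst p) (snd p) z w"
    using kl_equiv_refine[OF assms(1) _ assms(3-5)] by (auto simp: kl_class_def)
  then show ?thesis
    unfolding bond_def w_def[symmetric] by (metis kl_class_eqI)
qed

lemma iota_in_Xtilde:
  assumes "shift ` X = X" "x \<in> X"
  shows "iota X x \<in> Xtilde X"
  using assms by (auto simp: Xtilde_def iota_def kXl_def bond_kl_class)

lemma Xtilde_coordinate:
  assumes "xt \<in> Xtilde X" "q \<in> Iset"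
  obtains z where "z \<in> X" "xt q = kl_class X (fst q) (snd q) z"
proof -
  have "xt q \<in> (\<lambda>(k, l). kXl X k l) q"
    using assms by (auto simp: Xtilde_def intro: PiE_mem)
  then show ?thesis
    using that by (auto simp: kXl_def case_prod_beta)
qed

lemma Xtilde_eq_iota_if_singleton_class:
  assumes surj: "shift ` X = X" and "x \<in> X"
    and xt: "xt \<in> Xtilde X"
    and p: "p \<in> Iset" "kl_class X (fst p) (snd p) x = {x}" "xt p = {x}"
  shows "xt = iota X x"
proof
  fix q
  show "xt q = iota X x q"
  proof (cases "q \<in> Iset")
    case False
    then show ?thesis using xt by (auto simp: Xtilde_def iota_def)
  next
    case True
    obtain r where r: "r \<in> Iset" "Ile p r" "Ile q r"
      using Ile_directed[OF p(1) True] by blast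
    obtain z where z: "z \<in> X" "xt r = kl_class X (fst r) (snd r) z"
      using Xtilde_coordinate[OF xt r(1)] .
    have bond_xt: "xt s = bond X (fst s) (snd s) (xt r)" if "s \<in> Iset" "Ile s r" for s
      using xt that r(1) by (auto simp: Xtilde_def)
    have "kl_class X (fst p) (snd p) z = {x}"
      using bond_xt[OF p(1) r(2)] p(3) z bond_kl_class[OF surj z(1) p(1) r(1,2)] by simp
    then have "z = x"
      using kl_class_self[OF z(1)] by blast
    then show ?thesis
      using bond_xt[OF True r(3)] z bond_kl_class[OF surj z(1) True r(1,3)] True
      by (simp add: iota_def)
  qed
qed

lemma openin_Xtilde_cylinder:
  assumes "p \<in> Iset"
  shows "openin (Xtilde_top X) {xt \<in> Xtilde X. xt p = c}"
proof -
  let ?P = "product_topology (\<lambda>(k, l). discrete_topology (kXl X k l)) Iset"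
  have "openin ?P {xt \<in> topspace ?P. xt p \<in> {c} \<inter> kXl X (fst p) (snd p)}"
    using continuous_map_product_projection[OF assms, of "\<lambda>(k, l). discrete_topology (kXl X k l)"]
    by (intro openin_continuous_map_preimage) (auto simp: case_prod_beta)
  moreover have "{xt \<in> Xtilde X. xt p = c} =
      {xt \<in> topspace ?P. xt p \<in> {c} \<inter> kXl X (fst p) (snd p)} \<inter> Xtilde X"
    using assms by (auto simp: Xtilde_def topspace_product_topology case_prod_beta PiE_iff)
  ultimately show ?thesis
    unfolding Xtilde_top_def openin_subtopology by blast
qed

lemma openin_iota_if_singleton_class:
  assumes "shift ` X = X" "x \<in> X" "k \<le> l" "kl_class X k l x = {x}"
  shows "openin (Xtilde_top X) {iota X x}"
proof -
  have p: "(k, l) \<in> Iset" using assms(3) by (simp add: Iset_def)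
  have "{xt \<in> Xtilde X. xt (k, l) = {x}} = {iota X x}"
  proof (intro equalityI subsetI)
    fix xt assume "xt \<in> {xt \<in> Xtilde X. xt (k, l) = {x}}"
    then show "xt \<in> {iota X x}"
      using Xtilde_eq_iota_if_singleton_class[OF assms(1,2) _ p] assms(4) by simp
  next
    fix xt assume "xt \<in> {iota X x}"
    then show "xt \<in> {xt \<in> Xtilde X. xt (k, l) = {x}}"
      using iota_in_Xtilde[OF assms(1,2)] assms(4) p by (simp add: iota_def)
  qed
  with openin_Xtilde_cylinder[OF p, of X "{x}"] show ?thesis by simp
qed

lemma two_le_card_or_infinite_iff:
  "2 \<le> card A \<or> infinite A \<longleftrightarrow> (\<exists>a b. a \<noteq> b \<and> a \<in> A \<and> b \<in> A)"
proof (cases "finite A")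
  case True
  then show ?thesis using card_le_Suc0_iff_eq[OF True] by auto
next
  case False
  then obtain a where "a \<in> A" using infinite_imp_nonempty by blast
  moreover obtain b where "b \<in> A - {a}"
    using False infinite_imp_nonempty[of "A - {a}"] by auto
  ultimately show ?thesis using False by blast
qed

lemma inj_conc_single: "inj (\<lambda>a. conc [a] x)"
proof (rule injI)
  fix a b assume "conc [a] x = conc [b] x"
  then have "conc [a] x 0 = conc [b] x 0" by simp
  then show "a = b" by (simp add: conc_def)
qed

lemma shift_preimage_eq: "{y \<in> X. shift y = x} = (\<lambda>a. conc [a] x) ` {a. conc [a] x \<in> X}"
proof (intro equalityI subsetI)
  fix y assume y: "y \<in> {y \<in> X. shift y = x}"
  then have "y = conc [y 0] x"
    by (auto simp: conc_def shift_def fun_eq_iff) (metis Suc_pred)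
  with y show "y \<in> (\<lambda>a. conc [a] x) ` {a. conc [a] x \<in> X}" by auto
qed (auto simp: shift_conc_single)

lemma Sp_l_iff:
  "x \<in> Sp_l X \<longleftrightarrow> x \<in> X \<and> (\<exists>a b. a \<noteq> b \<and> conc [a] x \<in> X \<and> conc [b] x \<in> X)"
proof -
  let ?A = "{a. conc [a] x \<in> X}"
  have "card {y \<in> X. shift y = x} = card ?A" "finite {y \<in> X. shift y = x} \<longleftrightarrow> finite ?A"
    unfolding shift_preimage_eq
    using inj_on_subset[OF inj_conc_single, of ?A] by (auto simp: card_image finite_image_iff)
  then show ?thesis
    unfolding Sp_l_def using two_le_card_or_infinite_iff[of ?A] by auto
qed

lemma Sp_l_kl_equiv_Suc:
  assumes "x \<in> Sp_l X" "z \<in> X" "kl_equiv X k (Suc k) x z"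
  shows "z \<in> Sp_l X"
proof -
  have agree: "\<forall>i<k. x i = z i"
    and P: "P_set X (Suc k) ((shift ^^ k) x) = P_set X (Suc k) ((shift ^^ k) z)"
    using assms(3) by (auto simp: kl_equiv_def)
  have "conc [c] z \<in> X" if "conc [c] x \<in> X" for c
  proof -
    have "conc (c # map x [0..<k]) ((shift ^^ k) x) \<in> X"
      using that conc_Cons_prefix[of k x x c] by simp
    then have "c # map x [0..<k] \<in> P_set X (Suc k) ((shift ^^ k) x)"
      using conc_in_lang by (auto simp: P_set_def)
    then have "c # map x [0..<k] \<in> P_set X (Suc k) ((shift ^^ k) z)"
      unfolding P .
    then have "conc (c # map x [0..<k]) ((shift ^^ k) z) \<in> X"
      by (simp add: P_set_def)
    then show ?thesis
      using conc_Cons_prefix[OF agree] by simp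
  qed
  with assms(1,2) show ?thesis
    unfolding Sp_l_iff by blast
qed

lemma finite_separating_prefix:
  fixes x :: "nat \<Rightarrow> 'a"
  assumes "finite S" "x \<notin> S"
  shows "\<exists>k. \<forall>y\<in>S. \<exists>n<k. y n \<noteq> x n"
  using assms
proof (induction S rule: finite_induct)
  case (insert y S)
  then obtain k where k: "\<forall>y\<in>S. \<exists>n<k. y n \<noteq> x n" by blast
  from insert.prems have "y \<noteq> x" by auto
  then obtain m where "y m \<noteq> x m" by (meson ext)
  with k have "\<forall>z\<in>insert y S. \<exists>n<max k (Suc m). z n \<noteq> x n"
    by (auto simp: less_max_iff_disj)
  then show ?case by blast
qed simp

lemma kl_class_Sp_l_singleton:
  assumes "finite (Sp_l X)" "x \<in> Sp_l X"
  obtains k where "kl_class X k (Suc k) x = {x}"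
proof -
  obtain k where sep: "\<forall>y\<in>Sp_l X - {x}. \<exists>n<k. y n \<noteq> x n"
    using finite_separating_prefix[of "Sp_l X - {x}" x] assms(1) by blast
  have "z = x" if "z \<in> kl_class X k (Suc k) x" for z
  proof -
    from that have "z \<in> X" "kl_equiv X k (Suc k) x z" by (auto simp: kl_class_def)
    then have "z \<in> Sp_l X" "\<forall>i<k. z i = x i"
      using Sp_l_kl_equiv_Suc[OF assms(2)] by (auto simp: kl_equiv_def)
    then show "z = x" using sep by blast
  qed
  moreover have "x \<in> kl_class X k (Suc k) x"
    using assms(2) by (simp add: Sp_l_def kl_class_self)
  ultimately have "kl_class X k (Suc k) x = {x}" by blast
  then show ?thesis by (rule that)
qed

theorem proposition3p4:
  fixes X :: "(nat \<Rightarrow> 'a::finite) set"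
  assumes "subshift X"
    and "shift ` X = X"
    and "finite (Sp_l X)"
    and "\<forall>x\<in>Sp_l X. \<not> periodic_pt x"
    and "x \<in> Sp_l X"
  shows "openin (Xtilde_top X) {iota X x}"
proof -
  obtain k where "kl_class X k (Suc k) x = {x}"
    using kl_class_Sp_l_singleton[OF assms(3,5)] .
  moreover have "x \<in> X" using assms(5) by (simp add: Sp_l_def)
  ultimately show ?thesis
    using openin_iota_if_singleton_class[OF assms(2), of x k "Suc k"] by simp
qed

end
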